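(* Let $\Lambda$ be a row-finite $k$-graph with no sources, $R$ a commutative ring with $1$, and $m\in\mathbb{N}^k$. Then the family $\{s_\alpha s_{\beta^*}: \alpha,\beta\in\Lambda,\ s(\alpha)=s(\beta),\ d(\beta)=m\}$ (indexed by the pairs $(\alpha,\beta)$) is linearly independent over $R$ in $\mathrm{KP}_R(\Lambda)$. (In particular, for $m=0$, $\{s_\alpha:\alpha\in\Lambda\}$ is linearly independent.)
   Context: A $k$-graph is a countable category $\Lambda$ with a functor $d:\Lambda\to\mathbb{N}^k$ ($\mathbb{N}^k$ a one-object category under addition) with unique factorization: whenever $d(\lambda)=m+n$ there are unique $\mu,\nu$ with $d(\mu)=m,d(\nu)=n,\lambda=\mu\nu$. $\Lambda^0$ = vertices (degree-$0$ morphisms), $\Lambda^n=d^{-1}(n)$, $r,s$ range and source, $\lambda\mu$ defined when $s(\lambda)=r(\mu)$, $v\Lambda^n=\{\lambda\in\Lambda^n:r(\lambda)=v\}$. Row-finite: $v\Lambda^n$ finite; no sources: $v\Lambda^n\ne\emptyset$. Kumjian-Pask $\Lambda$-family in an $R$-algebra $A$: $P:\Lambda^0\to A$, $S:\Lambda^{\ne0}\cup\{\lambda^*:\lambda\in\Lambda^{\neq0}\}\to A$ (with $\Lambda^{\neq0}$ the paths of nonzero degree) such that (KP1) $P_v$ are mutually orthogonal idempotents; (KP2) for $r(\mu)=s(\lambda)$: $S_\lambda S_\mu=S_{\lambda\mu}$, $S_{\mu^*}S_{\lambda^*}=S_{(\lambda\mu)^*}$, $P_{r(\lambda)}S_\lambda=S_\lambda=S_\lambda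 P_{s(\lambda)}$, $P_{s(\lambda)}S_{\lambda^*}=S_{\lambda^*}=S_{\lambda^*}P_{r(\lambda)}$; (KP3) $S_{\lambda^*}S_\mu=\delta_{\lambda,\mu}P_{s(\lambda)}$ when $d(\lambda)=d(\mu)$; (KP4) $P_v=\sum_{\lambda\in v\Lambda^n}S_\lambda S_{\lambda^*}$ for $n\ne0$. $\mathrm{KP}_R(\Lambda)$ is the $R$-algebra generated by a universal such family $(p,s)$. Convention: for a vertex $v$, $s_v$ and $s_{v^*}$ both mean $p_v$. *)

theory Defs
  imports Main "HOL-Library.Countable_Set"
begin

text \<open>Degrees: N^k is represented by functions nat => nat vanishing from index k on.
 A k-graph is given by its set of morphisms L (vertices = identity morphisms = degree-0
 morphisms), range r, source s, degree d and composition cmp (cmp l m = l m, defined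
 when s l = r m).\<close>

definition Nk :: "nat \<Rightarrow> (nat \<Rightarrow> nat) set" where
  "Nk k = {n. \<forall>i\<ge>k. n i = 0}"

definition is_kgraph ::
  "nat \<Rightarrow> 'p set \<Rightarrow> ('p \<Rightarrow> 'p) \<Rightarrow> ('p \<Rightarrow> 'p) \<Rightarrow> ('p \<Rightarrow> nat \<Rightarrow> nat) \<Rightarrow> ('p \<Rightarrow> 'p \<Rightarrow> 'p) \<Rightarrow> bool"
where
  "is_kgraph k L r s d cmp \<longleftrightarrow>
     countable L \<and>
     (\<forall>l\<in>L. d l \<in> Nk k) \<and>
     (\<forall>l\<in>L. r l \<in> L \<and> s l \<in> L) \<and>
     (\<forall>l\<in>L. r (r l) = r l \<and> s (r l) = r l \<and> r (s l) = s l \<and> s (s l) = s l) \<and>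
     (\<forall>l\<in>L. d (r l) = (\<lambda>_. 0) \<and> d (s l) = (\<lambda>_. 0)) \<and>
     (\<forall>l\<in>L. \<forall>m\<in>L. s l = r m \<longrightarrow>
        cmp l m \<in> L \<and> r (cmp l m) = r l \<and> s (cmp l m) = s m \<and>
        d (cmp l m) = (\<lambda>i. d l i + d m i)) \<and>
     (\<forall>l\<in>L. cmp (r l) l = l \<and> cmp l (s l) = l) \<and>
     (\<forall>l\<in>L. \<forall>m\<in>L. \<forall>n\<in>L. s l = r m \<and> s m = r n \<longrightarrow>
        cmp (cmp l m) n = cmp l (cmp m n)) \<and>
     (\<forall>l\<in>L. \<forall>m n. d l = (\<lambda>i. m i + n i) \<longrightarrow>
        (\<exists>a b. a \<in> L \<and> b \<in> L \<and> s a = r b \<and> d a = m \<and> d b = n \<and> cmp a b = l \<and>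
           (\<forall>a' b'. a' \<in> L \<and> b' \<in> L \<and> s a' = r b' \<and> d a' = m \<and> d b' = n \<and> cmp a' b' = l
              \<longrightarrow> a' = a \<and> b' = b)))"

definition vertices :: "'p set \<Rightarrow> ('p \<Rightarrow> nat \<Rightarrow> nat) \<Rightarrow> 'p set" where
  "vertices L d = {v \<in> L. d v = (\<lambda>_. 0)}"

definition vpaths :: "'p set \<Rightarrow> ('p \<Rightarrow> 'p) \<Rightarrow> ('p \<Rightarrow> nat \<Rightarrow> nat) \<Rightarrow> 'p \<Rightarrow> (nat \<Rightarrow> nat) \<Rightarrow> 'p set" where
  "vpaths L r d v n = {l \<in> L. r l = v \<and> d l = n}"

definition row_finite :: "nat \<Rightarrow> 'p set \<Rightarrow> ('p \<Rightarrow> 'p) \<Rightarrow> ('p \<Rightarrow> nat \<Rightarrow> nat) \<Rightarrow> bool" where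
  "row_finite k L r d \<longleftrightarrow> (\<forall>v\<in>vertices L d. \<forall>n\<in>Nk k. finite (vpaths L r d v n))"

definition no_sources :: "nat \<Rightarrow> 'p set \<Rightarrow> ('p \<Rightarrow> 'p) \<Rightarrow> ('p \<Rightarrow> nat \<Rightarrow> nat) \<Rightarrow> bool" where
  "no_sources k L r d \<longleftrightarrow> (\<forall>v\<in>vertices L d. \<forall>n\<in>Nk k. vpaths L r d v n \<noteq> {})"

text \<open>Elements of the free R-algebra R<X> are finitely supported functions from words
 (lists of generators) to R; multiplication is convolution along concatenation.\<close>

definition fin_supp :: "('g list \<Rightarrow> 'r::zero) \<Rightarrow> bool" where
  "fin_supp f \<longleftrightarrow> finite {w. f w \<noteq> 0}"

definition wmono :: "'g list \<Rightarrow> 'g list \<Rightarrow> 'r::zero_neq_one" where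
  "wmono u = (\<lambda>w. if w = u then 1 else 0)"

definition fmul :: "('g list \<Rightarrow> 'r::comm_ring_1) \<Rightarrow> ('g list \<Rightarrow> 'r) \<Rightarrow> 'g list \<Rightarrow> 'r" where
  "fmul f g = (\<lambda>w. \<Sum>i\<le>length w. f (take i w) * g (drop i w))"

definition fsub :: "('g list \<Rightarrow> 'r::comm_ring_1) \<Rightarrow> ('g list \<Rightarrow> 'r) \<Rightarrow> 'g list \<Rightarrow> 'r" where
  "fsub f g = (\<lambda>w. f w - g w)"

inductive_set gen_ideal :: "('g list \<Rightarrow> 'r::comm_ring_1) set \<Rightarrow> ('g list \<Rightarrow> 'r) set"
  for G :: "('g list \<Rightarrow> 'r::comm_ring_1) set" where
  gen: "x \<in> G \<Longrightarrow> x \<in> gen_ideal G"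
| zero: "(\<lambda>_. 0) \<in> gen_ideal G"
| add: "x \<in> gen_ideal G \<Longrightarrow> y \<in> gen_ideal G \<Longrightarrow> (\<lambda>w. x w + y w) \<in> gen_ideal G"
| lmul: "fin_supp a \<Longrightarrow> x \<in> gen_ideal G \<Longrightarrow> fmul a x \<in> gen_ideal G"
| rmul: "fin_supp a \<Longrightarrow> x \<in> gen_ideal G \<Longrightarrow> fmul x a \<in> gen_ideal G"

datatype 'p kpgen = Pg 'p | Sg 'p | Sstg 'p

text \<open>Convention: for a vertex v, s_v and s_{v*} both mean p_v.\<close>
definition sgen :: "('p \<Rightarrow> nat \<Rightarrow> nat) \<Rightarrow> 'p \<Rightarrow> 'p kpgen" where
  "sgen d l = (if d l = (\<lambda>_. 0) then Pg l else Sg l)"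

definition sgen_star :: "('p \<Rightarrow> nat \<Rightarrow> nat) \<Rightarrow> 'p \<Rightarrow> 'p kpgen" where
  "sgen_star d l = (if d l = (\<lambda>_. 0) then Pg l else Sstg l)"

text \<open>The relations (KP1)-(KP4), each written as an element "lhs - rhs" of R<X>.\<close>
definition kp_rels ::
  "nat \<Rightarrow> 'p set \<Rightarrow> ('p \<Rightarrow> 'p) \<Rightarrow> ('p \<Rightarrow> 'p) \<Rightarrow> ('p \<Rightarrow> nat \<Rightarrow> nat) \<Rightarrow> ('p \<Rightarrow> 'p \<Rightarrow> 'p)
   \<Rightarrow> ('p kpgen list \<Rightarrow> 'r::comm_ring_1) set"
where
  "kp_rels k L r s d cmp =
     \<comment> \<open>KP1\<close>
     {fsub (wmono [Pg v, Pg w]) (if v = w then wmono [Pg v] else (\<lambda>_. 0)) | v w.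
        v \<in> vertices L d \<and> w \<in> vertices L d}
   \<union> \<comment> \<open>KP2\<close>
     {fsub (wmono [Sg l, Sg m]) (wmono [Sg (cmp l m)]) | l m.
        l \<in> L \<and> m \<in> L \<and> d l \<noteq> (\<lambda>_. 0) \<and> d m \<noteq> (\<lambda>_. 0) \<and> s l = r m}
   \<union> {fsub (wmono [Sstg m, Sstg l]) (wmono [Sstg (cmp l m)]) | l m.
        l \<in> L \<and> m \<in> L \<and> d l \<noteq> (\<lambda>_. 0) \<and> d m \<noteq> (\<lambda>_. 0) \<and> s l = r m}
   \<union> {fsub (wmono [Pg (r l), Sg l]) (wmono [Sg l]) | l. l \<in> L \<and> d l \<noteq> (\<lambda>_. 0)}
   \<union> {fsub (wmono [Sg l, Pg (s l)]) (wmono [Sg l]) | l. l \<in> L \<and> d l \<noteq> (\<lambda>_. 0)}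
   \<union> {fsub (wmono [Pg (s l), Sstg l]) (wmono [Sstg l]) | l. l \<in> L \<and> d l \<noteq> (\<lambda>_. 0)}
   \<union> {fsub (wmono [Sstg l, Pg (r l)]) (wmono [Sstg l]) | l. l \<in> L \<and> d l \<noteq> (\<lambda>_. 0)}
   \<union> \<comment> \<open>KP3\<close>
     {fsub (wmono [Sstg l, Sg m]) (if l = m then wmono [Pg (s l)] else (\<lambda>_. 0)) | l m.
        l \<in> L \<and> m \<in> L \<and> d l = d m \<and> d l \<noteq> (\<lambda>_. 0)}
   \<union> \<comment> \<open>KP4\<close>
     {fsub (wmono [Pg v]) (\<lambda>w. \<Sum>l\<in>vpaths L r d v n. wmono [Sg l, Sstg l] w) | v n.
        v \<in> vertices L d \<and> n \<in> Nk k \<and> n \<noteq> (\<lambda>_. 0)}"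

text \<open>KP_R(Lambda) = R<X> / (ideal generated by the KP relations); an element x of R<X>
 represents 0 in KP_R(Lambda) iff it lies in this ideal.\<close>
definition kp_ideal ::
  "nat \<Rightarrow> 'p set \<Rightarrow> ('p \<Rightarrow> 'p) \<Rightarrow> ('p \<Rightarrow> 'p) \<Rightarrow> ('p \<Rightarrow> nat \<Rightarrow> nat) \<Rightarrow> ('p \<Rightarrow> 'p \<Rightarrow> 'p)
   \<Rightarrow> ('p kpgen list \<Rightarrow> 'r::comm_ring_1) set"
where
  "kp_ideal k L r s d cmp = gen_ideal (kp_rels k L r s d cmp)"

end

theory Submission
  imports Defs "HOL-Library.Function_Algebras"
begin

text \<open>
  Let \<open>\<Lambda>\<close> act on the free \<open>R\<close>-module whose basis consists of pairs \<open>(x, g)\<close> of an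
  infinite path \<open>x\<close> and an integer vector \<open>g\<close>: \<open>p\<^sub>v\<close> fixes \<open>(x, g)\<close> when \<open>x\<close> starts at \<open>v\<close>,
  \<open>s\<^sub>\<lambda>\<close> sends it to \<open>(\<lambda>x, g + d(\<lambda>))\<close> and \<open>s\<^sub>\<lambda>\<^sub>*\<close> sends \<open>(\<lambda>x', g)\<close> to \<open>(x', g - d(\<lambda>))\<close>,
  everything else being sent to \<open>0\<close>. Every word in the generators acts by a partial map
  on basis vectors, and the Kumjian-Pask relations hold, so every element of the
  defining ideal has all matrix entries zero in this representation. Now fix
  \<open>(\<alpha>\<^sub>0, \<beta>\<^sub>0)\<close> and an infinite path \<open>y\<close> from \<open>s(\<beta>\<^sub>0)\<close>. The entry of \<open>\<Sum> c(\<alpha>,\<beta>) s\<^sub>\<alpha> s\<^sub>\<beta>\<^sub>*\<close>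
  from \<open>(\<beta>\<^sub>0y, 0)\<close> to \<open>(\<alpha>\<^sub>0y, d(\<alpha>\<^sub>0) - d(\<beta>\<^sub>0))\<close> is \<open>c(\<alpha>\<^sub>0, \<beta>\<^sub>0)\<close>: as all \<open>\<beta>\<close> have degree
  \<open>m\<close>, only \<open>\<beta> = \<beta>\<^sub>0\<close> can act on \<open>\<beta>\<^sub>0y\<close>, and \<open>\<alpha>\<close> is recovered from \<open>\<alpha>y\<close> and \<open>d(\<alpha>)\<close>.
  The degree component is what makes the last step work: \<open>\<alpha>y\<close> alone need not
  determine \<open>\<alpha>\<close> (think of a single loop).
\<close>

lemma Nk_0: "0 \<in> Nk k"
  by (simp add: Nk_def)

lemma Nk_add: "a \<in> Nk k \<Longrightarrow> b \<in> Nk k \<Longrightarrow> a + b \<in> Nk k"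
  by (simp add: Nk_def)

lemma fun_le_add1: "(a :: nat \<Rightarrow> nat) \<le> a + b"
  by (simp add: le_fun_def)

lemma fun_le_add2: "(b :: nat \<Rightarrow> nat) \<le> a + b"
  by (simp add: le_fun_def)

locale kgraph =
  fixes k :: nat and L :: "'p set" and r s :: "'p \<Rightarrow> 'p"
    and d :: "'p \<Rightarrow> nat \<Rightarrow> nat" and cmp :: "'p \<Rightarrow> 'p \<Rightarrow> 'p"
  assumes is_kgraph: "is_kgraph k L r s d cmp"
begin

lemma d_in_Nk: "l \<in> L \<Longrightarrow> d l \<in> Nk k"
  and r_in_L: "l \<in> L \<Longrightarrow> r l \<in> L"
  and s_in_L: "l \<in> L \<Longrightarrow> s l \<in> L"
  and s_r: "l \<in> L \<Longrightarrow> s (r l) = r l"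
  and r_s: "l \<in> L \<Longrightarrow> r (s l) = s l"
  and d_r: "l \<in> L \<Longrightarrow> d (r l) = 0"
  and d_s: "l \<in> L \<Longrightarrow> d (s l) = 0"
  and cmp_r: "l \<in> L \<Longrightarrow> cmp (r l) l = l"
  and cmp_s: "l \<in> L \<Longrightarrow> cmp l (s l) = l"
  using is_kgraph by (simp_all add: is_kgraph_def zero_fun_def)

lemma cmp_in_L: "l \<in> L \<Longrightarrow> m \<in> L \<Longrightarrow> s l = r m \<Longrightarrow> cmp l m \<in> L"
  and r_cmp: "l \<in> L \<Longrightarrow> m \<in> L \<Longrightarrow> s l = r m \<Longrightarrow> r (cmp l m) = r l"
  and s_cmp: "l \<in> L \<Longrightarrow> m \<in> L \<Longrightarrow> s l = r m \<Longrightarrow> s (cmp l m) = s m"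
  and d_cmp: "l \<in> L \<Longrightarrow> m \<in> L \<Longrightarrow> s l = r m \<Longrightarrow> d (cmp l m) = d l + d m"
  using is_kgraph by (simp_all add: is_kgraph_def plus_fun_def)

lemma cmp_assoc:
  "l \<in> L \<Longrightarrow> m \<in> L \<Longrightarrow> n \<in> L \<Longrightarrow> s l = r m \<Longrightarrow> s m = r n \<Longrightarrow>
   cmp (cmp l m) n = cmp l (cmp m n)"
  using is_kgraph unfolding is_kgraph_def by blast

lemma vertices_iff: "v \<in> vertices L d \<longleftrightarrow> v \<in> L \<and> d v = 0"
  by (simp add: vertices_def zero_fun_def)

lemma r_in_vertices: "l \<in> L \<Longrightarrow> r l \<in> vertices L d"
  and s_in_vertices: "l \<in> L \<Longrightarrow> s l \<in> vertices L d"
  by (simp_all add: vertices_iff r_in_L s_in_L d_r d_s)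

definition factors :: "'p \<Rightarrow> (nat \<Rightarrow> nat) \<Rightarrow> 'p \<Rightarrow> 'p \<Rightarrow> bool" where
  "factors l m a b \<longleftrightarrow> a \<in> L \<and> b \<in> L \<and> s a = r b \<and> d a = m \<and> cmp a b = l"

lemma factors_exists:
  assumes "l \<in> L" "m \<le> d l"
  shows "\<exists>a b. factors l m a b"
proof -
  have "d l = (\<lambda>i. m i + (d l - m) i)"
    using assms(2) by (auto simp: le_fun_def fun_eq_iff)
  then show ?thesis
    using is_kgraph assms(1) unfolding is_kgraph_def factors_def by blast
qed

lemma factors_unique:
  assumes "factors l m a b" "factors l m a' b'"
  shows "a = a' \<and> b = b'"
proof -
  have "l \<in> L" "d l = m + d b" "d l = m + d b'"
    using assms cmp_in_L d_cmp unfolding factors_def by metis+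
  then obtain a0 b0 where "\<forall>a' b'. a' \<in> L \<and> b' \<in> L \<and> s a' = r b' \<and> d a' = m \<and> d b' = d b
      \<and> cmp a' b' = l \<longrightarrow> a' = a0 \<and> b' = b0"
    using is_kgraph unfolding is_kgraph_def plus_fun_def by blast
  moreover have "d b' = d b"
    using \<open>d l = m + d b\<close> \<open>d l = m + d b'\<close> by simp
  ultimately show ?thesis
    using assms unfolding factors_def by metis
qed

definition fac :: "'p \<Rightarrow> (nat \<Rightarrow> nat) \<Rightarrow> 'p \<times> 'p" where
  "fac l m = (THE p. factors l m (fst p) (snd p))"

definition fac_left :: "'p \<Rightarrow> (nat \<Rightarrow> nat) \<Rightarrow> 'p" where
  "fac_left l m = fst (fac l m)"

definition fac_right :: "'p \<Rightarrow> (nat \<Rightarrow> nat) \<Rightarrow> 'p" where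
  "fac_right l m = snd (fac l m)"

lemma factors_fac:
  assumes "l \<in> L" "m \<le> d l"
  shows "factors l m (fac_left l m) (fac_right l m)"
proof -
  obtain a b where ab: "factors l m a b"
    using factors_exists assms by blast
  have "factors l m (fst (fac l m)) (snd (fac l m))"
    unfolding fac_def by (rule theI[of _ "(a, b)"]) (use ab factors_unique in auto)
  then show ?thesis
    by (simp add: fac_left_def fac_right_def)
qed

lemma fac_eqI:
  assumes "factors l m a b"
  shows "fac_left l m = a" "fac_right l m = b"
proof -
  have "l \<in> L" "m \<le> d l"
    using assms cmp_in_L d_cmp fun_le_add1 unfolding factors_def by metis+
  then show "fac_left l m = a" "fac_right l m = b"
    using factors_unique factors_fac assms by blast+
qed

lemma fac_props:
  assumes "l \<in> L" "m \<le> d l"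
  shows "fac_left l m \<in> L" "fac_right l m \<in> L" "s (fac_left l m) = r (fac_right l m)"
    "d (fac_left l m) = m" "cmp (fac_left l m) (fac_right l m) = l"
    "d l = m + d (fac_right l m)" "r (fac_left l m) = r l" "s (fac_right l m) = s l"
  using factors_fac[OF assms] d_cmp r_cmp s_cmp unfolding factors_def by metis+

lemma fac_cmp:
  assumes "a \<in> L" "b \<in> L" "s a = r b"
  shows "fac_left (cmp a b) (d a) = a" "fac_right (cmp a b) (d a) = b"
  using fac_eqI[of "cmp a b" "d a" a b] assms unfolding factors_def by auto

lemma fac_left_cmp:
  assumes "a \<in> L" "b \<in> L" "s a = r b" "m \<le> d a"
  shows "fac_left (cmp a b) m = fac_left a m"
proof -
  note P = fac_props[OF assms(1,4)]
  have "cmp a b = cmp (fac_left a m) (cmp (fac_right a m) b)"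
    using cmp_assoc[of "fac_left a m" "fac_right a m" b] P assms by auto
  then have "factors (cmp a b) m (fac_left a m) (cmp (fac_right a m) b)"
    unfolding factors_def using P assms cmp_in_L r_cmp by auto
  then show ?thesis
    using fac_eqI by auto
qed

lemma fac_0:
  assumes "l \<in> L"
  shows "fac_left l 0 = r l" "fac_right l 0 = l"
proof -
  have "factors l 0 (r l) l"
    unfolding factors_def using assms r_in_L s_r d_r cmp_r by auto
  then show "fac_left l 0 = r l" "fac_right l 0 = l"
    using fac_eqI by auto
qed

lemma fac_degree:
  assumes "l \<in> L"
  shows "fac_left l (d l) = l" "fac_right l (d l) = s l"
proof -
  have "factors l (d l) l (s l)"
    unfolding factors_def using assms s_in_L r_s cmp_s by auto
  then show "fac_left l (d l) = l" "fac_right l (d l) = s l"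
    using fac_eqI by auto
qed

lemma degree_0_vertex:
  assumes "l \<in> L" "d l = 0"
  shows "r l = l" "s l = l"
proof -
  have "factors l 0 (r l) l" "factors l 0 l (s l)"
    unfolding factors_def using assms r_in_L s_in_L s_r r_s d_r cmp_r cmp_s by auto
  then show "r l = l" "s l = l"
    using factors_unique s_r assms(1) by metis+
qed

lemma fac_left_fac_left:
  assumes "l \<in> L" "m \<le> m'" "m' \<le> d l"
  shows "fac_left (fac_left l m') m = fac_left l m"
  using fac_left_cmp[of "fac_left l m'" "fac_right l m'" m] fac_props[OF assms(1,3)] assms(2)
  by simp

lemma fac_right_fac_right:
  assumes "l \<in> L" "q + p \<le> d l"
  shows "fac_right (fac_right l q) p = fac_right l (q + p)"
    "fac_left (fac_right l q) p = fac_right (fac_left l (q + p)) q"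
proof -
  have q: "q \<le> d l"
    using assms(2) fun_le_add1 order_trans by blast
  note P = fac_props[OF assms(1) q]
  have "p \<le> d (fac_right l q)"
    using assms(2) P(6) by (metis add_le_cancel_left)
  note Q = fac_props[OF P(2) this]
  define a where "a = cmp (fac_left l q) (fac_left (fac_right l q) p)"
  have "factors l (q + p) a (fac_right (fac_right l q) p)"
    using cmp_assoc[of "fac_left l q" "fac_left (fac_right l q) p" "fac_right (fac_right l q) p"]
      cmp_in_L d_cmp s_cmp P Q unfolding factors_def a_def by auto
  note E = fac_eqI[OF this]
  then show "fac_right (fac_right l q) p = fac_right l (q + p)"
    by simp
  show "fac_left (fac_right l q) p = fac_right (fac_left l (q + p)) q"
    using E fac_cmp(2) P Q unfolding a_def by metis
qed

text \<open>
  An infinite path is modelled by its initial segments \<open>x n = x(0, n)\<close>, one for each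
  \<open>n \<in> \<nat>\<^sup>k\<close>, compatible under \<open>fac_left\<close>; the value off \<open>Nk k\<close> is normalised so
  that infinite paths are determined by their segments.
\<close>

definition infpath :: "((nat \<Rightarrow> nat) \<Rightarrow> 'p) \<Rightarrow> bool" where
  "infpath x \<longleftrightarrow> (\<forall>n\<in>Nk k. x n \<in> L \<and> d (x n) = n) \<and>
     (\<forall>n\<in>Nk k. \<forall>p\<in>Nk k. n \<le> p \<longrightarrow> fac_left (x p) n = x n) \<and>
     (\<forall>n. n \<notin> Nk k \<longrightarrow> x n = undefined)"

definition prepend :: "'p \<Rightarrow> ((nat \<Rightarrow> nat) \<Rightarrow> 'p) \<Rightarrow> (nat \<Rightarrow> nat) \<Rightarrow> 'p" where
  "prepend l x = (\<lambda>n. if n \<in> Nk k then fac_left (cmp l (x n)) n else undefined)"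

definition shift :: "(nat \<Rightarrow> nat) \<Rightarrow> ((nat \<Rightarrow> nat) \<Rightarrow> 'p) \<Rightarrow> (nat \<Rightarrow> nat) \<Rightarrow> 'p" where
  "shift p x = (\<lambda>n. if n \<in> Nk k then fac_right (x (p + n)) p else undefined)"

lemma infpath_in_L: "infpath x \<Longrightarrow> n \<in> Nk k \<Longrightarrow> x n \<in> L"
  and infpath_degree: "infpath x \<Longrightarrow> n \<in> Nk k \<Longrightarrow> d (x n) = n"
  and infpath_fac_left: "infpath x \<Longrightarrow> n \<in> Nk k \<Longrightarrow> p \<in> Nk k \<Longrightarrow> n \<le> p \<Longrightarrow> fac_left (x p) n = x n"
  unfolding infpath_def by blast+

lemma infpath_eqI:
  assumes "infpath x" "infpath y" "\<And>n. n \<in> Nk k \<Longrightarrow> x n = y n"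
  shows "x = y"
  using assms unfolding infpath_def by (metis ext)

lemma r_infpath:
  assumes "infpath x" "n \<in> Nk k"
  shows "r (x n) = x 0"
  using infpath_fac_left[OF assms(1) Nk_0 assms(2)] fac_0 infpath_in_L assms
  by (simp add: le_fun_def)

lemma infpath_split:
  assumes "infpath x" "n \<in> Nk k" "p \<in> Nk k" "n \<le> p"
  shows "x p = cmp (x n) (fac_right (x p) n)" "fac_right (x p) n \<in> L"
    "s (x n) = r (fac_right (x p) n)"
proof -
  have "n \<le> d (x p)"
    using infpath_degree assms by auto
  note P = fac_props[OF infpath_in_L[OF assms(1,3)] this]
  show "x p = cmp (x n) (fac_right (x p) n)" "fac_right (x p) n \<in> L"
    "s (x n) = r (fac_right (x p) n)"
    using P infpath_fac_left[OF assms] by auto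
qed

context
  fixes l x
  assumes x: "infpath x" and l: "l \<in> L" and sl: "s l = x 0"
begin

lemma s_eq_r_infpath: "n \<in> Nk k \<Longrightarrow> s l = r (x n)"
  using sl r_infpath[OF x] by simp

lemma cmp_infpath:
  assumes "n \<in> Nk k"
  shows "cmp l (x n) \<in> L" "d (cmp l (x n)) = d l + n" "n \<le> d (cmp l (x n))"
  using cmp_in_L d_cmp l infpath_in_L[OF x assms] s_eq_r_infpath[OF assms]
    infpath_degree[OF x assms] fun_le_add2 by metis+

lemma prepend_eq: "n \<in> Nk k \<Longrightarrow> prepend l x n = fac_left (cmp l (x n)) n"
  by (simp add: prepend_def)

lemma prepend_fac_left:
  assumes n: "n \<in> Nk k" and p: "p \<in> Nk k" and np: "n \<le> p"
  shows "fac_left (prepend l x p) n = prepend l x n"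
proof -
  note S = infpath_split[OF x n p np]
  have "cmp l (x p) = cmp (cmp l (x n)) (fac_right (x p) n)"
    using S cmp_assoc[of l "x n" "fac_right (x p) n"] l infpath_in_L[OF x n] s_eq_r_infpath[OF n]
    by auto
  then have "fac_left (cmp l (x p)) n = fac_left (cmp l (x n)) n"
    using fac_left_cmp[of "cmp l (x n)" "fac_right (x p) n" n] S cmp_infpath[OF n]
      s_cmp l infpath_in_L[OF x n] s_eq_r_infpath[OF n] by simp
  then show ?thesis
    using fac_left_fac_left[OF cmp_infpath(1)[OF p] np cmp_infpath(3)[OF p]] n p
    by (simp add: prepend_eq)
qed

lemma infpath_prepend: "infpath (prepend l x)"
  unfolding infpath_def using prepend_fac_left fac_props cmp_infpath
  by (auto simp: prepend_def)

lemma prepend_at_0: "prepend l x 0 = r l"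
  using fac_0(1)[OF cmp_infpath(1)[OF Nk_0]] r_cmp l infpath_in_L[OF x Nk_0] s_eq_r_infpath[OF Nk_0]
  by (simp add: prepend_eq Nk_0)

lemma prepend_at_degree: "prepend l x (d l) = l"
  using fac_cmp(1) l infpath_in_L[OF x d_in_Nk[OF l]] s_eq_r_infpath[OF d_in_Nk[OF l]]
  by (simp add: prepend_eq d_in_Nk)

end

lemma shift_at_0:
  assumes "infpath x" "p \<in> Nk k"
  shows "shift p x 0 = s (x p)"
  using fac_degree(2)[OF infpath_in_L[OF assms]] infpath_degree[OF assms]
  by (simp add: shift_def Nk_0)

lemma infpath_shift:
  assumes x: "infpath x" and p: "p \<in> Nk k"
  shows "infpath (shift p x)"
proof -
  have "fac_right (x (p + n)) p \<in> L \<and> d (fac_right (x (p + n)) p) = n" if n: "n \<in> Nk k" for n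
  proof -
    have pn: "p + n \<in> Nk k"
      using Nk_add p n by auto
    have "p \<le> d (x (p + n))"
      using infpath_degree[OF x pn] fun_le_add1 by metis
    note P = fac_props[OF infpath_in_L[OF x pn] this]
    have "p + n = p + d (fac_right (x (p + n)) p)"
      using P(6) infpath_degree[OF x pn] by simp
    then show ?thesis
      using P(2) by simp
  qed
  moreover have "fac_left (shift p x q) n = shift p x n"
    if n: "n \<in> Nk k" and q: "q \<in> Nk k" and nq: "n \<le> q" for n q
  proof -
    have pq: "p + q \<in> Nk k" and pn: "p + n \<in> Nk k"
      using Nk_add p q n by auto
    have "fac_left (fac_right (x (p + q)) p) n = fac_right (fac_left (x (p + q)) (p + n)) p"
      using fac_right_fac_right(2) infpath_in_L[OF x pq] infpath_degree[OF x pq] add_left_mono[OF nq]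
      by metis
    also have "fac_left (x (p + q)) (p + n) = x (p + n)"
      using infpath_fac_left[OF x pn pq] add_left_mono[OF nq] by blast
    finally show ?thesis
      using n q by (simp add: shift_def plus_fun_def)
  qed
  ultimately show ?thesis
    unfolding infpath_def by (auto simp: shift_def)
qed

lemma shift_prepend:
  assumes x: "infpath x" and l: "l \<in> L" and sl: "s l = x 0"
  shows "shift (d l) (prepend l x) = x"
proof (rule infpath_eqI)
  show "infpath (shift (d l) (prepend l x))"
    using infpath_shift infpath_prepend assms d_in_Nk by blast
  fix n
  assume n: "n \<in> Nk k"
  have ln: "d l + n \<in> Nk k"
    using Nk_add d_in_Nk[OF l] n by auto
  note S = infpath_split[OF x n ln fun_le_add2]
  have sx: "s l = r (x n)"
    using s_eq_r_infpath[OF x l sl n] .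
  have "cmp l (x (d l + n)) = cmp (cmp l (x n)) (fac_right (x (d l + n)) n)"
    using S cmp_assoc[of l "x n" "fac_right (x (d l + n)) n"] l infpath_in_L[OF x n] sx by auto
  then have "prepend l x (d l + n) = cmp l (x n)"
    using fac_cmp(1)[OF cmp_infpath(1)[OF x l sl n] S(2)] s_cmp l infpath_in_L[OF x n] sx S
      cmp_infpath(2)[OF x l sl n] ln
    by (simp add: prepend_def)
  then show "shift (d l) (prepend l x) n = x n"
    using fac_cmp(2) l infpath_in_L[OF x n] sx n by (simp add: shift_def)
qed (use x in simp)

lemma prepend_shift:
  assumes x: "infpath x" and l: "l \<in> L" and xl: "x (d l) = l"
  shows "prepend l (shift (d l) x) = x"
proof (rule infpath_eqI)
  have "s l = shift (d l) x 0"
    using shift_at_0[OF x d_in_Nk[OF l]] xl by simp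
  then show "infpath (prepend l (shift (d l) x))"
    using infpath_shift infpath_prepend assms d_in_Nk by metis
  fix n
  assume n: "n \<in> Nk k"
  have ln: "d l + n \<in> Nk k"
    using Nk_add d_in_Nk[OF l] n by auto
  have "cmp l (fac_right (x (d l + n)) (d l)) = x (d l + n)"
    using infpath_split[OF x d_in_Nk[OF l] ln fun_le_add1] xl by simp
  then show "prepend l (shift (d l) x) n = x n"
    using infpath_fac_left[OF x n ln fun_le_add2] n by (simp add: prepend_def shift_def)
qed (use x in simp)

lemma prepend_prepend:
  assumes x: "infpath x" and l: "l \<in> L" and m: "m \<in> L" and sl: "s l = x 0" and sm: "s m = r l"
  shows "prepend m (prepend l x) = prepend (cmp m l) x"
proof -
  have "fac_left (cmp m (fac_left (cmp l (x n)) n)) n = fac_left (cmp (cmp m l) (x n)) n"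
    if n: "n \<in> Nk k" for n
  proof -
    have xn: "x n \<in> L" "s l = r (x n)"
      using infpath_in_L[OF x n] s_eq_r_infpath[OF x l sl n] by auto
    note C = cmp_infpath[OF x l sl n]
    note P = fac_props[OF C(1,3)]
    have rc: "r (cmp l (x n)) = r l"
      using r_cmp l xn by auto
    have "cmp (cmp m l) (x n) = cmp m (cmp (fac_left (cmp l (x n)) n) (fac_right (cmp l (x n)) n))"
      using cmp_assoc m l xn sm P(5) by auto
    also have "\<dots> = cmp (cmp m (fac_left (cmp l (x n)) n)) (fac_right (cmp l (x n)) n)"
      using cmp_assoc[of m "fac_left (cmp l (x n)) n" "fac_right (cmp l (x n)) n"] m P rc sm by auto
    finally show ?thesis
      using fac_left_cmp[of "cmp m (fac_left (cmp l (x n)) n)" "fac_right (cmp l (x n)) n" n]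
        cmp_in_L s_cmp d_cmp m P rc sm fun_le_add2 by metis
  qed
  then show ?thesis
    unfolding prepend_def by (auto simp: fun_eq_iff)
qed

lemma shift_shift:
  assumes x: "infpath x" and p: "p \<in> Nk k" and q: "q \<in> Nk k"
  shows "shift p (shift q x) = shift (q + p) x"
proof -
  have "fac_right (fac_right (x (q + (p + n))) q) p = fac_right (x (q + p + n)) (q + p)"
    if n: "n \<in> Nk k" for n
  proof -
    have qpn: "q + p + n \<in> Nk k"
      using Nk_add p q n by auto
    have "q + p \<le> d (x (q + p + n))"
      using infpath_degree[OF x qpn] fun_le_add1 by metis
    then show ?thesis
      using fac_right_fac_right(1) infpath_in_L[OF x qpn] by (simp add: add.assoc)
  qed
  then show ?thesis
    unfolding shift_def using Nk_add p by (auto simp: fun_eq_iff add.assoc)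
qed

lemma shift_0:
  assumes "infpath x"
  shows "shift 0 x = x"
  using infpath_eqI[OF infpath_shift[OF assms Nk_0] assms] fac_0(2) infpath_in_L[OF assms]
  by (simp add: shift_def)

lemma prepend_vertex:
  assumes "infpath x" "v \<in> vertices L d" "x 0 = v"
  shows "prepend v x = x"
proof -
  have v: "v \<in> L" "d v = 0"
    using assms(2) by (auto simp: vertices_iff)
  then have sv: "s v = x 0"
    using degree_0_vertex(2) assms(3) by simp
  have "prepend v x = shift (d v) (prepend v x)"
    using shift_0[OF infpath_prepend[OF assms(1) v(1) sv]] v(2) by simp
  also have "\<dots> = x"
    using shift_prepend[OF assms(1) v(1) sv] .
  finally show ?thesis .
qed

lemma infpath_at_cmp_iff:
  assumes x: "infpath x" and l: "l \<in> L" and m: "m \<in> L" and lm: "s l = r m"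
  shows "x (d l + d m) = cmp l m \<longleftrightarrow> x (d l) = l \<and> shift (d l) x (d m) = m"
proof -
  have ln: "d l + d m \<in> Nk k"
    using Nk_add d_in_Nk l m by auto
  have "shift (d l) x (d m) = fac_right (x (d l + d m)) (d l)"
    using d_in_Nk[OF m] by (simp add: shift_def)
  then show ?thesis
    using infpath_split[OF x d_in_Nk[OF l] ln fun_le_add1] infpath_fac_left[OF x d_in_Nk[OF l] ln fun_le_add1]
      fac_cmp[OF l m lm] by metis
qed

definition diag :: "nat \<Rightarrow> nat \<Rightarrow> nat" where
  "diag j = (\<lambda>i. if i < k then j else 0)"

lemma diag_in_Nk: "diag j \<in> Nk k"
  by (simp add: diag_def Nk_def)

lemma diag_mono: "j \<le> j' \<Longrightarrow> diag j \<le> diag j'"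
  by (simp add: diag_def le_fun_def)

lemma le_diag_sum: "n \<in> Nk k \<Longrightarrow> n \<le> diag (sum n {..<k})"
  by (auto simp: le_fun_def diag_def Nk_def intro: member_le_sum)

definition diag_path :: "('p \<Rightarrow> 'p) \<Rightarrow> 'p \<Rightarrow> nat \<Rightarrow> 'p" where
  "diag_path e v = rec_nat v (\<lambda>_ z. cmp z (e (s z)))"

context
  fixes e v
  assumes e: "\<forall>u\<in>vertices L d. e u \<in> vpaths L r d u (diag 1)" and v: "v \<in> vertices L d"
begin

lemma diag_path_props: "diag_path e v j \<in> L \<and> d (diag_path e v j) = diag j \<and> r (diag_path e v j) = v"
proof (induction j)
  case 0
  then show ?case
    using v degree_0_vertex(1) by (auto simp: diag_path_def vertices_iff diag_def zero_fun_def)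
next
  case (Suc j)
  then have "e (s (diag_path e v j)) \<in> L" "r (e (s (diag_path e v j))) = s (diag_path e v j)"
    "d (e (s (diag_path e v j))) = diag 1"
    using e s_in_vertices by (auto simp: vpaths_def)
  moreover have "diag (Suc j) = diag j + diag 1"
    by (simp add: diag_def fun_eq_iff)
  ultimately show ?case
    using Suc cmp_in_L d_cmp r_cmp by (simp add: diag_path_def)
qed

lemma fac_left_diag_path: "j \<le> j' \<Longrightarrow> fac_left (diag_path e v j') (diag j) = diag_path e v j"
proof (induction j')
  case 0
  then show ?case
    using diag_path_props[of 0] fac_degree(1)[of "diag_path e v 0"] by simp
next
  case (Suc j')
  show ?case
  proof (cases "j = Suc j'")
    case True
    then show ?thesis
      using fac_degree(1)[of "diag_path e v (Suc j')"] diag_path_props by simp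
  next
    case False
    then have "j \<le> j'"
      using Suc by auto
    moreover have "e (s (diag_path e v j')) \<in> L" "r (e (s (diag_path e v j'))) = s (diag_path e v j')"
      using e s_in_vertices diag_path_props by (auto simp: vpaths_def)
    ultimately show ?thesis
      using fac_left_cmp[of "diag_path e v j'" "e (s (diag_path e v j'))" "diag j"] diag_path_props
        diag_mono Suc.IH
      by (simp add: diag_path_def)
  qed
qed

end

text \<open>The segment of degree \<open>n\<close> is cut from a diagonal path long enough to contain it.\<close>

lemma infpath_exists:
  assumes ns: "no_sources k L r d" and v: "v \<in> vertices L d"
  shows "\<exists>x. infpath x \<and> x 0 = v"
proof -
  obtain e where e: "\<forall>u\<in>vertices L d. e u \<in> vpaths L r d u (diag 1)"
  proof -
    have "\<forall>u\<in>vertices L d. \<exists>t. t \<in> vpaths L r d u (diag 1)"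
      using ns diag_in_Nk unfolding no_sources_def by blast
    then show thesis
      using that by (metis bchoice)
  qed
  define z where "z = diag_path e v"
  note z = diag_path_props[OF e v, folded z_def]
    and z_fac = fac_left_diag_path[OF e v, folded z_def]
  define J where "J n = sum n {..<k}" for n :: "nat \<Rightarrow> nat"
  have J_mono: "n \<le> p \<Longrightarrow> J n \<le> J p" for n p
    unfolding J_def by (simp add: le_fun_def sum_mono)
  define x where "x n = (if n \<in> Nk k then fac_left (z (J n)) n else undefined)" for n
  have "x n \<in> L \<and> d (x n) = n" if n: "n \<in> Nk k" for n
    using fac_props(1,4)[of "z (J n)" n] le_diag_sum[OF n] z n by (simp add: x_def J_def)
  moreover have "fac_left (x p) n = x n" if n: "n \<in> Nk k" and p: "p \<in> Nk k" and np: "n \<le> p" for n p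
  proof -
    have "fac_left (fac_left (z (J p)) p) n = fac_left (z (J p)) n"
      using fac_left_fac_left z np le_diag_sum[OF p] by (simp add: J_def)
    also have "\<dots> = fac_left (fac_left (z (J p)) (diag (J n))) n"
      using fac_left_fac_left[of "z (J p)" n "diag (J n)"] z le_diag_sum[OF n] diag_mono[OF J_mono[OF np]]
      by (simp add: J_def)
    also have "\<dots> = fac_left (z (J n)) n"
      using z_fac J_mono[OF np] by simp
    finally show ?thesis
      using n p by (simp add: x_def)
  qed
  ultimately have "infpath x"
    unfolding infpath_def by (auto simp: x_def)
  moreover have "x 0 = v"
    using fac_0(1) z[of 0] by (simp add: x_def J_def Nk_0)
  ultimately show ?thesis
    by blast
qed

end

text \<open>
  If words in the generators act on a set of states by partial maps \<open>act\<close>, with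
  \<open>act (u @ v) = act u \<circ> act v\<close>, then \<open>entry act e e' f\<close> is the coefficient of \<open>e'\<close> in
  \<open>f \<cdot> e\<close> for the induced representation of the free algebra on the free module over
  the states. It is meaningful only for finitely supported \<open>f\<close>.
\<close>

definition entry :: "('g list \<Rightarrow> 'e \<Rightarrow> 'e option) \<Rightarrow> 'e \<Rightarrow> 'e \<Rightarrow> ('g list \<Rightarrow> 'r::comm_ring_1) \<Rightarrow> 'r" where
  "entry act e e' f = (\<Sum>w \<in> {w. f w \<noteq> 0 \<and> act w e = Some e'}. f w)"

lemma entry_eq_sum:
  assumes "finite W" "{w. f w \<noteq> 0} \<subseteq> W"
  shows "entry act e e' f = (\<Sum>w\<in>W. if act w e = Some e' then f w else 0)"
proof -
  have "entry act e e' f = (\<Sum>w \<in> {w\<in>W. f w \<noteq> 0 \<and> act w e = Some e'}. f w)"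
    unfolding entry_def using assms(2) by (intro sum.cong) auto
  also have "\<dots> = (\<Sum>w\<in>W. if f w \<noteq> 0 \<and> act w e = Some e' then f w else 0)"
    using assms(1) by (rule sum.inter_filter)
  also have "\<dots> = (\<Sum>w\<in>W. if act w e = Some e' then f w else 0)"
    by (intro sum.cong) auto
  finally show ?thesis .
qed

lemma fin_supp_zero: "fin_supp (\<lambda>_. 0 :: 'r::comm_ring_1)"
  and entry_zero: "entry act e e' (\<lambda>_. 0 :: 'r::comm_ring_1) = 0"
  by (simp_all add: fin_supp_def entry_def)

lemma fin_supp_wmono: "fin_supp (wmono u :: _ \<Rightarrow> 'r::comm_ring_1)"
  unfolding fin_supp_def by (rule finite_subset[of _ "{u}"]) (auto simp: wmono_def)

lemma entry_wmono:
  "entry act e e' (wmono u :: _ \<Rightarrow> 'r::comm_ring_1) = (if act u e = Some e' then 1 else 0)"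
  by (subst entry_eq_sum[of "{u}"]) (auto simp: wmono_def)

lemma fin_supp_add:
  "fin_supp f \<Longrightarrow> fin_supp g \<Longrightarrow> fin_supp (\<lambda>w. f w + g w :: 'r::comm_ring_1)"
  unfolding fin_supp_def by (rule finite_subset[of _ "{w. f w \<noteq> 0} \<union> {w. g w \<noteq> 0}"]) auto

lemma fin_supp_fsub:
  "fin_supp f \<Longrightarrow> fin_supp g \<Longrightarrow> fin_supp (fsub f g :: _ \<Rightarrow> 'r::comm_ring_1)"
  unfolding fin_supp_def fsub_def by (rule finite_subset[of _ "{w. f w \<noteq> 0} \<union> {w. g w \<noteq> 0}"]) auto

lemma entry_add:
  fixes f g :: "_ \<Rightarrow> 'r::comm_ring_1"
  assumes "fin_supp f" "fin_supp g"
  shows "entry act e e' (\<lambda>w. f w + g w) = entry act e e' f + entry act e e' g"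
proof -
  let ?W = "{w. f w \<noteq> 0} \<union> {w. g w \<noteq> 0}"
  have "finite ?W"
    using assms by (simp add: fin_supp_def)
  then show ?thesis
    by (subst (1 2 3) entry_eq_sum[of ?W]) (auto simp flip: sum.distrib intro!: sum.cong)
qed

lemma entry_fsub:
  fixes f g :: "_ \<Rightarrow> 'r::comm_ring_1"
  assumes "fin_supp f" "fin_supp g"
  shows "entry act e e' (fsub f g) = entry act e e' f - entry act e e' g"
proof -
  let ?W = "{w. f w \<noteq> 0} \<union> {w. g w \<noteq> 0}"
  have "finite ?W"
    using assms by (simp add: fin_supp_def)
  then show ?thesis
    by (subst (1 2 3) entry_eq_sum[of ?W]) (auto simp: fsub_def simp flip: sum_subtractf intro!: sum.cong)
qed

lemma lincomb_supp_subset: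
  "{w. (\<Sum>l\<in>V. c l * wmono (f l) w) \<noteq> (0::'r::comm_ring_1)} \<subseteq> f ` V"
proof
  fix w
  assume "w \<in> {w. (\<Sum>l\<in>V. c l * wmono (f l) w) \<noteq> (0::'r)}"
  then obtain l where "l \<in> V" "c l * wmono (f l) w \<noteq> (0::'r)"
    by (auto elim: sum.not_neutral_contains_not_neutral)
  then show "w \<in> f ` V"
    by (auto simp: wmono_def split: if_splits)
qed

lemma fin_supp_lincomb:
  "finite V \<Longrightarrow> fin_supp (\<lambda>w. \<Sum>l\<in>V. c l * wmono (f l) w :: 'r::comm_ring_1)"
  unfolding fin_supp_def by (rule finite_subset[OF lincomb_supp_subset]) simp

lemma entry_lincomb:
  fixes c :: "'i \<Rightarrow> 'r::comm_ring_1"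
  assumes V: "finite V"
  shows "entry act e e' (\<lambda>w. \<Sum>l\<in>V. c l * wmono (f l) w) = (\<Sum>l\<in>V. if act (f l) e = Some e' then c l else 0)"
proof -
  have "entry act e e' (\<lambda>w. \<Sum>l\<in>V. c l * wmono (f l) w)
      = (\<Sum>w\<in>f ` V. if act w e = Some e' then \<Sum>l\<in>V. c l * wmono (f l) w else 0)"
    using V lincomb_supp_subset[of c f V] by (intro entry_eq_sum) auto
  also have "\<dots> = (\<Sum>w\<in>f ` V. \<Sum>l\<in>V. if act w e = Some e' \<and> w = f l then c l else 0)"
    by (intro sum.cong) (auto simp: wmono_def intro!: sum.cong)
  also have "\<dots> = (\<Sum>l\<in>V. \<Sum>w\<in>f ` V. if w = f l then (if act (f l) e = Some e' then c l else 0) else 0)"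
    by (subst sum.swap) (auto intro!: sum.cong)
  also have "\<dots> = (\<Sum>l\<in>V. if act (f l) e = Some e' then c l else 0)"
    using V by (simp add: sum.delta)
  finally show ?thesis .
qed

lemma entry_wmono_diff_eq_0:
  "act u e = act v e \<Longrightarrow> entry act e e' (fsub (wmono u) (wmono v) :: _ \<Rightarrow> 'r::comm_ring_1) = 0"
  by (simp add: entry_fsub fin_supp_wmono entry_wmono)

lemma entry_wmono_diff_if_eq_0:
  "act u e = (if P then act v e else None) \<Longrightarrow>
    entry act e e' (fsub (wmono u) (if P then wmono v else (\<lambda>_. 0)) :: _ \<Rightarrow> 'r::comm_ring_1) = 0"
  by (cases P) (simp_all add: entry_fsub fin_supp_wmono fin_supp_zero entry_wmono entry_zero)

lemma bij_betw_take_drop: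
  "bij_betw (\<lambda>i. (take i w, drop i w)) {..length w} {p. fst p @ snd p = w}"
  unfolding bij_betw_def
proof
  show "inj_on (\<lambda>i. (take i w, drop i w)) {..length w}"
  proof (rule inj_onI)
    fix i j
    assume "i \<in> {..length w}" "j \<in> {..length w}" "(take i w, drop i w) = (take j w, drop j w)"
    then have "length (take i w) = length (take j w)"
      by simp
    then show "i = j"
      using \<open>i \<in> {..length w}\<close> \<open>j \<in> {..length w}\<close> by simp
  qed
  show "(\<lambda>i. (take i w, drop i w)) ` {..length w} = {p. fst p @ snd p = w}"
  proof
    show "{p. fst p @ snd p = w} \<subseteq> (\<lambda>i. (take i w, drop i w)) ` {..length w}"
    proof
      fix p
      assume "p \<in> {p. fst p @ snd p = w}"
      then have "p = (take (length (fst p)) w, drop (length (fst p)) w)" "length (fst p) \<in> {..length w}"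
        by auto
      then show "p \<in> (\<lambda>i. (take i w, drop i w)) ` {..length w}"
        by blast
    qed
  qed auto
qed

lemma fmul_eq_lincomb:
  fixes a x :: "'g list \<Rightarrow> 'r::comm_ring_1"
  assumes "finite A" "{u. a u \<noteq> 0} \<subseteq> A" "finite B" "{v. x v \<noteq> 0} \<subseteq> B"
  shows "fmul a x = (\<lambda>w. \<Sum>p\<in>A \<times> B. (a (fst p) * x (snd p)) * wmono (fst p @ snd p) w)"
proof
  fix w :: "'g list"
  let ?P = "{p. fst p @ snd p = w}"
  let ?g = "\<lambda>p. a (fst p) * x (snd p)"
  have finP: "finite ?P"
    using bij_betw_finite[OF bij_betw_take_drop] by blast
  have "fmul a x w = (\<Sum>p\<in>?P. ?g p)"
    unfolding fmul_def using sum.reindex_bij_betw[OF bij_betw_take_drop, of ?g] by simp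
  also have "\<dots> = (\<Sum>p\<in>?P \<inter> (A \<times> B). ?g p)"
    by (rule sum.mono_neutral_right[OF finP]) (use assms in auto)
  also have "\<dots> = (\<Sum>p\<in>A \<times> B. if fst p @ snd p = w then ?g p else 0)"
    using assms by (subst sum.inter_filter[symmetric]) (auto intro!: sum.cong)
  also have "\<dots> = (\<Sum>p\<in>A \<times> B. ?g p * wmono (fst p @ snd p) w)"
    by (intro sum.cong) (auto simp: wmono_def)
  finally show "fmul a x w = (\<Sum>p\<in>A \<times> B. ?g p * wmono (fst p @ snd p) w)" .
qed

lemma fin_supp_fmul:
  fixes a x :: "'g list \<Rightarrow> 'r::comm_ring_1"
  assumes "fin_supp a" "fin_supp x"
  shows "fin_supp (fmul a x)"
proof -
  have fin: "finite {u. a u \<noteq> 0}" "finite {v. x v \<noteq> 0}"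
    using assms by (simp_all add: fin_supp_def)
  then have "fmul a x = (\<lambda>w. \<Sum>p\<in>{u. a u \<noteq> 0} \<times> {v. x v \<noteq> 0}. (a (fst p) * x (snd p)) * wmono (fst p @ snd p) w)"
    by (intro fmul_eq_lincomb) auto
  then show ?thesis
    using fin_supp_lincomb[of "{u. a u \<noteq> 0} \<times> {v. x v \<noteq> 0}" "\<lambda>p. a (fst p) * x (snd p)"
        "\<lambda>p. fst p @ snd p"] fin
    by simp
qed

lemma if_act_append_eq_sum:
  fixes a b :: "'r::comm_ring_1"
  assumes act_append: "\<And>u v e. act (u @ v) e = Option.bind (act v e) (act u)"
    and F: "finite F" "\<And>e0. act v e = Some e0 \<Longrightarrow> e0 \<in> F"
  shows "(if act (u @ v) e = Some e' then a * b else 0) =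
    (\<Sum>e''\<in>F. (if act v e = Some e'' then b else 0) * (if act u e'' = Some e' then a else 0))"
proof (cases "act v e")
  case (Some e0)
  then have "(\<Sum>e''\<in>F. (if act v e = Some e'' then b else 0) * (if act u e'' = Some e' then a else 0))
      = b * (if act u e0 = Some e' then a else 0)"
    using F by (simp add: sum.delta if_distrib[of "\<lambda>t. t * _"] cong: if_cong)
  then show ?thesis
    using act_append Some by (simp add: mult.commute)
qed (simp add: act_append)

text \<open>The matrix of a product is the product of the matrices; the intermediate states
  can be restricted to those reached from \<open>e\<close>.\<close>

lemma entry_fmul:
  fixes a x :: "'g list \<Rightarrow> 'r::comm_ring_1"
  assumes act_append: "\<And>u v e. act (u @ v) e = Option.bind (act v e) (act u)"
    and "fin_supp a" "fin_supp x"
  shows "\<exists>F. finite F \<and> (\<forall>e''\<in>F. \<exists>v. act v e = Some e'') \<and>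
    entry act e e' (fmul a x) = (\<Sum>e''\<in>F. entry act e e'' x * entry act e'' e' a)"
proof -
  define A where "A = {u. a u \<noteq> 0}"
  define B where "B = {v. x v \<noteq> 0}"
  have A: "finite A" and B: "finite B"
    using assms by (auto simp: A_def B_def fin_supp_def)
  define F where "F = (\<lambda>v. the (act v e)) ` {v\<in>B. act v e \<noteq> None}"
  have F: "finite F" "\<forall>e''\<in>F. \<exists>v. act v e = Some e''"
    using B by (auto simp: F_def)
  let ?X = "\<lambda>e'' v. if act v e = Some e'' then x v else 0"
  let ?Y = "\<lambda>e'' u. if act u e'' = Some e' then a u else 0"
  have "entry act e e' (fmul a x) = (\<Sum>p\<in>A \<times> B. if act (fst p @ snd p) e = Some e' then a (fst p) * x (snd p) else 0)"
    using A B by (simp add: fmul_eq_lincomb[of A a B x] entry_lincomb A_def B_def)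
  also have "\<dots> = (\<Sum>p\<in>A \<times> B. \<Sum>e''\<in>F. ?X e'' (snd p) * ?Y e'' (fst p))"
  proof (intro sum.cong refl)
    fix p
    assume "p \<in> A \<times> B"
    then have "act (snd p) e = Some e0 \<Longrightarrow> e0 \<in> F" for e0
      by (force simp: F_def)
    then show "(if act (fst p @ snd p) e = Some e' then a (fst p) * x (snd p) else 0) =
        (\<Sum>e''\<in>F. ?X e'' (snd p) * ?Y e'' (fst p))"
      by (rule if_act_append_eq_sum[OF act_append F(1)])
  qed
  also have "\<dots> = (\<Sum>e''\<in>F. (\<Sum>v\<in>B. ?X e'' v) * (\<Sum>u\<in>A. ?Y e'' u))"
  proof (subst sum.swap, intro sum.cong refl)
    fix e''
    have "(\<Sum>p\<in>A \<times> B. ?X e'' (snd p) * ?Y e'' (fst p)) = (\<Sum>u\<in>A. \<Sum>v\<in>B. ?X e'' v * ?Y e'' u)"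
      by (simp add: sum.cartesian_product split_def)
    also have "\<dots> = (\<Sum>v\<in>B. ?X e'' v) * (\<Sum>u\<in>A. ?Y e'' u)"
      by (subst sum.swap) (simp add: sum_product)
    finally show "(\<Sum>p\<in>A \<times> B. ?X e'' (snd p) * ?Y e'' (fst p)) = (\<Sum>v\<in>B. ?X e'' v) * (\<Sum>u\<in>A. ?Y e'' u)" .
  qed
  also have "\<dots> = (\<Sum>e''\<in>F. entry act e e'' x * entry act e'' e' a)"
  proof -
    have "entry act e e'' x = (\<Sum>v\<in>B. ?X e'' v)" "entry act e'' e' a = (\<Sum>u\<in>A. ?Y e'' u)" for e''
      by (rule entry_eq_sum[OF B], simp add: B_def) (rule entry_eq_sum[OF A], simp add: A_def)
    then show ?thesis
      by simp
  qed
  finally show ?thesis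
    using F by blast
qed

lemma entry_fmul_left_eq_0:
  fixes a z :: "'g list \<Rightarrow> 'r::comm_ring_1"
  assumes "\<And>u v e. act (u @ v) e = Option.bind (act v e) (act u)" "fin_supp a" "fin_supp z"
    and "\<And>e''. entry act e e'' z = 0"
  shows "entry act e e' (fmul a z) = 0"
  using entry_fmul[OF assms(1-3), of e e'] assms(4) by auto

lemma entry_fmul_right_eq_0:
  fixes a z :: "'g list \<Rightarrow> 'r::comm_ring_1"
  assumes "\<And>u v e. act (u @ v) e = Option.bind (act v e) (act u)" "fin_supp z" "fin_supp a"
    and "\<And>v e''. act v e = Some e'' \<Longrightarrow> entry act e'' e' z = 0"
  shows "entry act e e' (fmul z a) = 0"
proof -
  obtain F where "\<forall>e''\<in>F. \<exists>v. act v e = Some e''"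
    "entry act e e' (fmul z a) = (\<Sum>e''\<in>F. entry act e e'' a * entry act e'' e' z)"
    using entry_fmul[OF assms(1-3), of e e'] by blast
  then show ?thesis
    using assms(4) by (metis (no_types, lifting) mult_zero_right sum.neutral)
qed

text \<open>States of the path-space representation: an infinite path together with an
  integer vector recording the net degree of the word applied so far.\<close>

type_synonym 'q state = "((nat \<Rightarrow> nat) \<Rightarrow> 'q) \<times> (nat \<Rightarrow> int)"

context kgraph
begin

definition ideg :: "'p \<Rightarrow> nat \<Rightarrow> int" where
  "ideg l = (\<lambda>i. int (d l i))"

definition act_gen :: "'p kpgen \<Rightarrow> 'p state \<Rightarrow> 'p state option" where
  "act_gen g e = (case g of
     Pg v \<Rightarrow> if v \<in> vertices L d \<and> fst e 0 = v then Some e else None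
   | Sg l \<Rightarrow> if l \<in> L \<and> d l \<noteq> (\<lambda>_. 0) \<and> s l = fst e 0
       then Some (prepend l (fst e), snd e + ideg l) else None
   | Sstg l \<Rightarrow> if l \<in> L \<and> d l \<noteq> (\<lambda>_. 0) \<and> fst e (d l) = l
       then Some (shift (d l) (fst e), snd e - ideg l) else None)"

primrec act :: "'p kpgen list \<Rightarrow> 'p state \<Rightarrow> 'p state option" where
  "act [] e = Some e"
| "act (g # w) e = Option.bind (act w e) (act_gen g)"

lemma act_append: "act (u @ v) e = Option.bind (act v e) (act u)"
  by (induction u) (auto split: option.splits)

lemma act_infpath: "infpath (fst e) \<Longrightarrow> act w e = Some e' \<Longrightarrow> infpath (fst e')"
proof (induction w arbitrary: e')
  case (Cons g w)
  then obtain e0 where "act w e = Some e0" "act_gen g e0 = Some e'"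
    by (auto split: Option.bind_splits)
  with Cons show ?case
    by (cases g) (auto simp: act_gen_def infpath_prepend infpath_shift d_in_Nk split: if_splits)
qed simp

lemma ideg_cmp: "l \<in> L \<Longrightarrow> m \<in> L \<Longrightarrow> s l = r m \<Longrightarrow> ideg (cmp l m) = ideg l + ideg m"
  using d_cmp by (auto simp: ideg_def fun_eq_iff)

lemma d_cmp_neq_0: "l \<in> L \<Longrightarrow> m \<in> L \<Longrightarrow> s l = r m \<Longrightarrow> d l \<noteq> (\<lambda>_. 0) \<Longrightarrow> d (cmp l m) \<noteq> (\<lambda>_. 0)"
  using d_cmp by (auto simp: fun_eq_iff)

lemma act_kp1:
  "v \<in> vertices L d \<Longrightarrow> w \<in> vertices L d \<Longrightarrow>
    act [Pg v, Pg w] e = (if v = w then act [Pg v] e else None)"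
  by (auto simp: act_gen_def)

context
  fixes x :: "(nat \<Rightarrow> nat) \<Rightarrow> 'p" and g :: "nat \<Rightarrow> int"
  assumes x: "infpath x"
begin

lemma act_kp2_s_s:
  assumes l: "l \<in> L" and m: "m \<in> L" and dl: "d l \<noteq> (\<lambda>_. 0)" and dm: "d m \<noteq> (\<lambda>_. 0)"
    and lm: "s l = r m"
  shows "act [Sg l, Sg m] (x, g) = act [Sg (cmp l m)] (x, g)"
proof (cases "s m = x 0")
  case True
  then show ?thesis
    using prepend_at_0[OF x m True] prepend_prepend[OF x m l True lm] cmp_in_L d_cmp_neq_0 s_cmp
      ideg_cmp assms
    by (simp add: act_gen_def add.assoc add.commute[of "ideg m"])
next
  case False
  then show ?thesis
    using s_cmp[OF l m lm] by (simp add: act_gen_def)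
qed

lemma act_kp2_st_st:
  assumes l: "l \<in> L" and m: "m \<in> L" and dl: "d l \<noteq> (\<lambda>_. 0)" and dm: "d m \<noteq> (\<lambda>_. 0)"
    and lm: "s l = r m"
  shows "act [Sstg m, Sstg l] (x, g) = act [Sstg (cmp l m)] (x, g)"
  using cmp_in_L d_cmp d_cmp_neq_0 shift_shift[OF x d_in_Nk[OF m] d_in_Nk[OF l]]
    infpath_at_cmp_iff[OF x l m lm] ideg_cmp assms
  by (auto simp: act_gen_def diff_diff_eq)

context
  fixes l
  assumes l: "l \<in> L" and dl: "d l \<noteq> (\<lambda>_. 0)"
begin

lemma act_kp2_p_s: "act [Pg (r l), Sg l] (x, g) = act [Sg l] (x, g)"
  using prepend_at_0[OF x l] r_in_vertices[OF l] l dl by (auto simp: act_gen_def)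

lemma act_kp2_s_p: "act [Sg l, Pg (s l)] (x, g) = act [Sg l] (x, g)"
  using s_in_vertices[OF l] l dl by (auto simp: act_gen_def)

lemma act_kp2_p_st: "act [Pg (s l), Sstg l] (x, g) = act [Sstg l] (x, g)"
  using shift_at_0[OF x d_in_Nk[OF l]] s_in_vertices[OF l] l dl by (auto simp: act_gen_def)

lemma act_kp2_st_p: "act [Sstg l, Pg (r l)] (x, g) = act [Sstg l] (x, g)"
  using r_infpath[OF x d_in_Nk[OF l]] r_in_vertices[OF l] l dl by (auto simp: act_gen_def)

end

lemma act_kp3:
  assumes l: "l \<in> L" and m: "m \<in> L" and dlm: "d l = d m" and dl: "d l \<noteq> (\<lambda>_. 0)"
  shows "act [Sstg l, Sg m] (x, g) = (if l = m then act [Pg (s l)] (x, g) else None)"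
proof (cases "s m = x 0")
  case True
  then show ?thesis
    using prepend_at_degree[OF x m True] shift_prepend[OF x m True] dlm dl l m s_in_vertices[OF m]
    by (auto simp: act_gen_def)
next
  case False
  then show ?thesis
    using s_in_vertices[OF l] by (auto simp: act_gen_def)
qed

lemma act_kp4_summand:
  assumes "l \<in> vpaths L r d v n" "n \<noteq> (\<lambda>_. 0)"
  shows "act [Sg l, Sstg l] (x, g) = (if x n = l then Some (x, g) else None)"
  using shift_at_0[OF x d_in_Nk] prepend_shift[OF x] assms by (auto simp: act_gen_def vpaths_def)

text \<open>(KP4) holds because an infinite path from \<open>v\<close> has exactly one initial segment of
  degree \<open>n\<close>.\<close>

lemma entry_kp4_eq_0:
  assumes rf: "row_finite k L r d" and v: "v \<in> vertices L d" and n: "n \<in> Nk k"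
    and nz: "n \<noteq> (\<lambda>_. 0)"
  shows "entry act (x, g) e'
    (fsub (wmono [Pg v]) (\<lambda>w. \<Sum>l\<in>vpaths L r d v n. wmono [Sg l, Sstg l] w) :: _ \<Rightarrow> 'r::comm_ring_1) = 0"
proof -
  define V where "V = vpaths L r d v n"
  have fin: "finite V"
    using rf v n unfolding row_finite_def V_def by blast
  have "x n \<in> V \<longleftrightarrow> x 0 = v"
    using infpath_in_L[OF x n] infpath_degree[OF x n] r_infpath[OF x n] by (auto simp: V_def vpaths_def)
  moreover have "entry act (x, g) e' (\<lambda>w. \<Sum>l\<in>V. 1 * wmono [Sg l, Sstg l] w :: 'r)
      = (\<Sum>l\<in>V. if act [Sg l, Sstg l] (x, g) = Some e' then 1 else 0)"
    by (rule entry_lincomb[OF fin])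
  moreover have "\<dots> = (\<Sum>l\<in>V. if x n = l then (if (x, g) = e' then 1 else 0) else 0)"
    using act_kp4_summand[OF _ nz] unfolding V_def by (intro sum.cong) auto
  ultimately have "entry act (x, g) e' (\<lambda>w. \<Sum>l\<in>V. 1 * wmono [Sg l, Sstg l] w :: 'r)
      = (if x 0 = v \<and> (x, g) = e' then 1 else 0)"
    using fin by (simp add: sum.delta)
  moreover have "entry act (x, g) e' (wmono [Pg v] :: _ \<Rightarrow> 'r) = (if x 0 = v \<and> (x, g) = e' then 1 else 0)"
    using v by (auto simp: entry_wmono act_gen_def)
  moreover have "fin_supp (\<lambda>w. \<Sum>l\<in>V. wmono [Sg l, Sstg l] w :: 'r)"
    using fin_supp_lincomb[OF fin, of "\<lambda>_. 1" "\<lambda>l. [Sg l, Sstg l]"] by simp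
  ultimately show ?thesis
    by (simp add: entry_fsub fin_supp_wmono V_def)
qed

lemma entry_kp_rels_eq_0:
  assumes rf: "row_finite k L r d" and rho: "\<rho> \<in> (kp_rels k L r s d cmp :: (_ \<Rightarrow> 'r::comm_ring_1) set)"
  shows "entry act (x, g) e' \<rho> = 0"
  using rho unfolding kp_rels_def
  apply (elim UnE CollectE exE conjE; hypsubst)
  subgoal by (rule entry_wmono_diff_if_eq_0, rule act_kp1)
  subgoal by (rule entry_wmono_diff_eq_0, rule act_kp2_s_s)
  subgoal by (rule entry_wmono_diff_eq_0, rule act_kp2_st_st)
  subgoal by (rule entry_wmono_diff_eq_0, rule act_kp2_p_s)
  subgoal by (rule entry_wmono_diff_eq_0, rule act_kp2_s_p)
  subgoal by (rule entry_wmono_diff_eq_0, rule act_kp2_p_st)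
  subgoal by (rule entry_wmono_diff_eq_0, rule act_kp2_st_p)
  subgoal by (rule entry_wmono_diff_if_eq_0, rule act_kp3)
  subgoal by (rule entry_kp4_eq_0[OF rf])
  done

end

lemma fin_supp_kp_rels:
  assumes rf: "row_finite k L r d" and rho: "\<rho> \<in> (kp_rels k L r s d cmp :: (_ \<Rightarrow> 'r::comm_ring_1) set)"
  shows "fin_supp \<rho>"
proof -
  have "fin_supp (\<lambda>w. \<Sum>l\<in>vpaths L r d v n. 1 * wmono [Sg l, Sstg l] w :: 'r)"
    if "v \<in> vertices L d" "n \<in> Nk k" for v n
    using rf that unfolding row_finite_def by (intro fin_supp_lincomb) blast
  then show ?thesis
    using rho unfolding kp_rels_def
    by (elim UnE CollectE exE conjE; hypsubst) (simp_all add: fin_supp_fsub fin_supp_wmono fin_supp_zero)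
qed

text \<open>Right multiplication only ever feeds states reached from an infinite path, which
  are infinite paths again by \<open>act_infpath\<close>.\<close>

lemma kp_ideal_entry_eq_0:
  assumes rf: "row_finite k L r d"
    and "z \<in> (kp_ideal k L r s d cmp :: (_ \<Rightarrow> 'r::comm_ring_1) set)"
  shows "fin_supp z \<and> (\<forall>e e'. infpath (fst e) \<longrightarrow> entry act e e' z = 0)"
  using assms(2) unfolding kp_ideal_def
proof (induction rule: gen_ideal.induct)
  case (gen \<rho>)
  have "entry act e e' \<rho> = 0" if "infpath (fst e)" for e e'
    using entry_kp_rels_eq_0[OF that rf gen, of "snd e" e'] by simp
  then show ?case
    using fin_supp_kp_rels[OF rf gen] by blast
next
  case zero
  then show ?case
    by (simp add: fin_supp_zero entry_zero)
next
  case (add y z)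
  then show ?case
    by (simp add: fin_supp_add entry_add)
next
  case (lmul a z)
  then show ?case
    using entry_fmul_left_eq_0[OF act_append] fin_supp_fmul by blast
next
  case (rmul a z)
  then show ?case
    using entry_fmul_right_eq_0[OF act_append] act_infpath fin_supp_fmul by blast
qed


lemma act_gen_sgen:
  assumes y: "infpath y" and a: "a \<in> L" and sa: "s a = y 0"
  shows "act_gen (sgen d a) (y, g) = Some (prepend a y, g + ideg a)"
proof (cases "d a = 0")
  case True
  then have "a \<in> vertices L d" "y 0 = a"
    using a sa degree_0_vertex(2) by (auto simp: vertices_iff)
  then show ?thesis
    using True prepend_vertex[OF y] by (simp add: sgen_def act_gen_def ideg_def zero_fun_def)
next
  case False
  then show ?thesis
    using a sa by (simp add: sgen_def act_gen_def zero_fun_def)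
qed

lemma act_gen_sgen_star_prepend:
  assumes y: "infpath y" and b: "b \<in> L" and b0: "b0 \<in> L" and db: "d b = d b0" and sb0: "s b0 = y 0"
  shows "act_gen (sgen_star d b) (prepend b0 y, g) = (if b = b0 then Some (y, g - ideg b0) else None)"
proof (cases "d b = 0")
  case True
  then have "b \<in> vertices L d" "b0 \<in> vertices L d" "y 0 = b0"
    using b b0 db sb0 degree_0_vertex(2)[OF b0] by (auto simp: vertices_iff)
  then show ?thesis
    using True db prepend_vertex[OF y] by (simp add: sgen_star_def act_gen_def ideg_def zero_fun_def)
next
  case False
  then show ?thesis
    using b db prepend_at_degree[OF y b0 sb0] shift_prepend[OF y b0 sb0]
    by (auto simp: sgen_star_def act_gen_def zero_fun_def)
qed

lemma act_sgen_sgen_star_prepend: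
  assumes y: "infpath y" and a: "a \<in> L" and b: "b \<in> L" and b0: "b0 \<in> L"
    and sab: "s a = s b" and db: "d b = d b0" and sb0: "s b0 = y 0"
  shows "act [sgen d a, sgen_star d b] (prepend b0 y, 0) =
    (if b = b0 then Some (prepend a y, ideg a - ideg b0) else None)"
proof (cases "b = b0")
  case True
  then have "s a = y 0"
    using sab sb0 by simp
  moreover have "act_gen (sgen_star d b) (prepend b0 y, 0) = Some (y, - ideg b0)"
    using act_gen_sgen_star_prepend[OF y b b0 db sb0] True by simp
  ultimately show ?thesis
    using act_gen_sgen[OF y a] True by simp
qed (simp add: act_gen_sgen_star_prepend[OF y b b0 db sb0])

lemma prepend_ideg_inj:
  assumes y: "infpath y" and a: "a \<in> L" and a': "a' \<in> L" and sa: "s a = y 0" and sa': "s a' = y 0"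
    and eq: "(prepend a y, ideg a - g) = (prepend a' y, ideg a' - g)"
  shows "a = a'"
proof -
  have "ideg a = ideg a'"
    using eq by simp
  then have "d a = d a'"
    by (simp add: ideg_def fun_eq_iff)
  have "a = prepend a y (d a)"
    using prepend_at_degree[OF y a sa] by simp
  also have "\<dots> = prepend a' y (d a')"
    using eq \<open>d a = d a'\<close> by simp
  also have "\<dots> = a'"
    using prepend_at_degree[OF y a' sa'] .
  finally show ?thesis .
qed

lemma entry_sgen_sgen_star_sum:
  assumes y: "infpath y" and S: "finite S" "S \<subseteq> {(a, b). a \<in> L \<and> b \<in> L \<and> s a = s b \<and> d b = m}"
    and ab0: "(a0, b0) \<in> S" and sb0: "s b0 = y 0"
  shows "entry act (prepend b0 y, 0) (prepend a0 y, ideg a0 - ideg b0)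
    (\<lambda>w. \<Sum>x\<in>S. c x * wmono [sgen d (fst x), sgen_star d (snd x)] w) = c (a0, b0)"
proof -
  have "act [sgen d a, sgen_star d b] (prepend b0 y, 0) = Some (prepend a0 y, ideg a0 - ideg b0)
      \<longleftrightarrow> (a, b) = (a0, b0)" if "(a, b) \<in> S" for a b
  proof -
    have a: "a \<in> L" "s a = s b" and a0: "a0 \<in> L" "s a0 = s b0"
      using that ab0 S(2) by auto
    have "act [sgen d a, sgen_star d b] (prepend b0 y, 0) =
        (if b = b0 then Some (prepend a y, ideg a - ideg b0) else None)"
      using act_sgen_sgen_star_prepend[OF y a(1) _ _ a(2) _ sb0] that ab0 S(2) by blast
    then show ?thesis
      using prepend_ideg_inj[OF y a(1) a0(1)] a a0 sb0 by auto
  qed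
  then have "entry act (prepend b0 y, 0) (prepend a0 y, ideg a0 - ideg b0)
      (\<lambda>w. \<Sum>x\<in>S. c x * wmono [sgen d (fst x), sgen_star d (snd x)] w)
      = (\<Sum>x\<in>S. if x = (a0, b0) then c x else 0)"
    by (subst entry_lincomb[OF S(1)]) (auto intro!: sum.cong)
  also have "\<dots> = c (a0, b0)"
    using S(1) ab0 by (simp add: sum.delta')
  finally show ?thesis .
qed

end

theorem lemma4p1:
  fixes k :: nat and L :: "'p set" and r s :: "'p \<Rightarrow> 'p"
    and d :: "'p \<Rightarrow> nat \<Rightarrow> nat" and cmp :: "'p \<Rightarrow> 'p \<Rightarrow> 'p"
    and m :: "nat \<Rightarrow> nat" and c :: "'p \<times> 'p \<Rightarrow> 'r::comm_ring_1"
  assumes "is_kgraph k L r s d cmp"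
    and "row_finite k L r d"
    and "no_sources k L r d"
    and "m \<in> Nk k"
    and "finite {x. c x \<noteq> 0}"
    and "{x. c x \<noteq> 0} \<subseteq> {(a, b). a \<in> L \<and> b \<in> L \<and> s a = s b \<and> d b = m}"
    and "(\<lambda>w. \<Sum>x\<in>{x. c x \<noteq> 0}. c x * wmono [sgen d (fst x), sgen_star d (snd x)] w)
           \<in> kp_ideal k L r s d cmp"
  shows "\<forall>x. c x = 0"
proof (rule ccontr)
  interpret kgraph k L r s d cmp
    by (rule kgraph.intro) (rule assms(1))
  assume "\<not> (\<forall>x. c x = 0)"
  then obtain a0 b0 where ab0: "(a0, b0) \<in> {x. c x \<noteq> 0}"
    by auto
  then have b0: "b0 \<in> L"
    using assms(6) by auto
  then obtain y where y: "infpath y" "y 0 = s b0"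
    using infpath_exists[OF assms(3) s_in_vertices] by blast
  let ?e = "(prepend b0 y, 0 :: nat \<Rightarrow> int)" and ?e' = "(prepend a0 y, ideg a0 - ideg b0)"
  have "entry act ?e ?e' (\<lambda>w. \<Sum>x\<in>{x. c x \<noteq> 0}. c x * wmono [sgen d (fst x), sgen_star d (snd x)] w)
      = c (a0, b0)"
    using entry_sgen_sgen_star_sum[OF y(1) assms(5,6) ab0] y(2) by simp
  moreover have "entry act ?e ?e' (\<lambda>w. \<Sum>x\<in>{x. c x \<noteq> 0}. c x * wmono [sgen d (fst x), sgen_star d (snd x)] w)
      = 0"
    using kp_ideal_entry_eq_0[OF assms(2,7)] infpath_prepend[OF y(1) b0] y(2) by simp
  ultimately show False
    using ab0 by simp
qed

end
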